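(* For $n\in\omega$ let $C_n=\{q^ip^j\in\mathcal{C}(p,q): i,j\le n\}$ and for $q^ip^j\in\mathcal{C}(p,q)$ let $W_n(q^ip^j)=\{q^ip^j\}\cup(\mathcal{C}(p,q)\setminus C_n)$. Let $\tau_c$ be the topology on $\mathcal{C}(p,q)$ generated by the neighbourhood bases $\{W_n(q^ip^j):n\in\omega\}$ at each point. Then $\tau_c$ is a compact $T_1$-topology on $\mathcal{C}(p,q)$ with respect to which the semigroup operation is separately continuous and the inversion is continuous.
   Context: The bicyclic monoid $\mathcal{C}(p,q)$ is the monoid generated by $p,q$ subject only to $pq=1$; elements are uniquely $q^ip^j$, $i,j\in\omega$, with multiplication $q^kp^l\cdot q^mp^n = q^{k-l+m}p^n$ if $l<m$, $=q^kp^n$ if $l=m$, $=q^kp^{l-m+n}$ if $l>m$, and inversion $(q^ip^j)^{-1}=q^jp^i$. *)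

theory Defs
  imports "HOL-Analysis.Analysis"
begin

text \<open>The bicyclic monoid C(p,q): the element q^i p^j is represented by the pair (i, j).\<close>
type_synonym bicyclic = "nat \<times> nat"

definition bc_mult :: "bicyclic \<Rightarrow> bicyclic \<Rightarrow> bicyclic" where
  "bc_mult a b = (case a of (k, l) \<Rightarrow> case b of (m, n) \<Rightarrow>
     if l < m then (k + (m - l), n)
     else if l = m then (k, n)
     else (k, (l - m) + n))"

definition bc_inv :: "bicyclic \<Rightarrow> bicyclic" where
  "bc_inv a = (case a of (i, j) \<Rightarrow> (j, i))"

definition bc_C :: "nat \<Rightarrow> bicyclic set" where
  "bc_C n = {(i, j). i \<le> n \<and> j \<le> n}"

definition bc_W :: "nat \<Rightarrow> bicyclic \<Rightarrow> bicyclic set" where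
  "bc_W n x = {x} \<union> (UNIV - bc_C n)"

definition tau_c :: "bicyclic topology" where
  "tau_c = topology_generated_by {bc_W n x | n x. True}"

end

theory Submission
  imports Defs
begin

text \<open>
  Every \<open>W\<^sub>n(x)\<close> is cofinite, because \<open>C\<^sub>n\<close> is finite; conversely a cofinite set \<open>U\<close>
  misses only points of some \<open>C\<^sub>n\<close>, so it is the union of the sets \<open>W\<^sub>n(x)\<close>, \<open>x \<in> U\<close>.
  Hence \<open>\<tau>\<^sub>c\<close> is the cofinite topology, which is compact and \<open>T\<^sub>1\<close> on any set. A map
  all of whose fibres are finite pulls cofinite sets back to cofinite sets, so it is
  continuous for the cofinite topology; left and right translations and the inversion
  of the bicyclic monoid have finite fibres.
\<close>

definition cofinite_topology :: "'a topology" where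
  "cofinite_topology = topology (\<lambda>U. U = {} \<or> finite (- U))"

lemma istopology_cofinite: "istopology (\<lambda>U :: 'a set. U = {} \<or> finite (- U))"
  unfolding istopology_def
proof (intro conjI allI impI)
  fix S T :: "'a set"
  assume "S = {} \<or> finite (- S)" "T = {} \<or> finite (- T)"
  then show "S \<inter> T = {} \<or> finite (- (S \<inter> T))"
    by auto
next
  fix \<K> :: "'a set set"
  assume cofinite: "\<forall>K\<in>\<K>. K = {} \<or> finite (- K)"
  show "\<Union>\<K> = {} \<or> finite (- \<Union>\<K>)"
  proof (cases "\<Union>\<K> = {}")
    case False
    then obtain K where "K \<in> \<K>" "K \<noteq> {}"
      by blast
    with cofinite have "finite (- K)" and "- \<Union>\<K> \<subseteq> - K"
      by auto
    then show ?thesis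
      using finite_subset by blast
  qed simp
qed

lemma openin_cofinite_topology: "openin cofinite_topology U \<longleftrightarrow> U = {} \<or> finite (- U)"
  unfolding cofinite_topology_def topology_inverse'[OF istopology_cofinite] ..

lemma topspace_cofinite_topology: "topspace cofinite_topology = UNIV"
proof -
  have "openin cofinite_topology UNIV"
    by (simp add: openin_cofinite_topology)
  then show ?thesis
    by (rule top.extremum_uniqueI[OF openin_subset])
qed

lemma compact_space_cofinite_topology: "compact_space cofinite_topology"
  unfolding compact_space_alt topspace_cofinite_topology
proof (intro allI impI)
  fix \<U> :: "'a set set"
  assume "(\<forall>U\<in>\<U>. openin cofinite_topology U) \<and> UNIV \<subseteq> \<Union>\<U>"
  then have opens: "\<And>U. U \<in> \<U> \<Longrightarrow> U = {} \<or> finite (- U)" and covers: "\<And>y. \<exists>U\<in>\<U>. y \<in> U"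
    by (auto simp: openin_cofinite_topology)
  obtain U\<^sub>0 where "U\<^sub>0 \<in> \<U>" "U\<^sub>0 \<noteq> {}"
    using covers by blast
  then have "finite (- U\<^sub>0)"
    using opens by blast
  obtain g where g: "\<And>y. g y \<in> \<U> \<and> y \<in> g y"
    using covers by metis
  define \<F> where "\<F> = insert U\<^sub>0 (g ` (- U\<^sub>0))"
  have "finite \<F>" "\<F> \<subseteq> \<U>" "UNIV \<subseteq> \<Union>\<F>"
    using \<open>finite (- U\<^sub>0)\<close> \<open>U\<^sub>0 \<in> \<U>\<close> g by (auto simp: \<F>_def)
  then show "\<exists>\<F>. finite \<F> \<and> \<F> \<subseteq> \<U> \<and> UNIV \<subseteq> \<Union>\<F>"
    by blast
qed

lemma t1_space_cofinite_topology: "t1_space cofinite_topology"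
  unfolding t1_space_def topspace_cofinite_topology
proof (intro ballI impI)
  fix x y :: 'a
  assume "x \<noteq> y"
  moreover have "openin cofinite_topology (- {y})"
    by (simp add: openin_cofinite_topology)
  ultimately show "\<exists>U. openin cofinite_topology U \<and> x \<in> U \<and> y \<notin> U"
    by blast
qed

lemma continuous_map_cofinite_topology:
  fixes f :: "'a \<Rightarrow> 'b"
  assumes "\<And>y. finite (f -` {y})"
  shows "continuous_map cofinite_topology cofinite_topology f"
  unfolding continuous_map_openin_preimage_eq topspace_cofinite_topology openin_cofinite_topology
proof (intro conjI allI impI)
  fix U :: "'b set"
  assume "U = {} \<or> finite (- U)"
  moreover have "- (UNIV \<inter> f -` U) = (\<Union>y\<in>- U. f -` {y})"
    by auto
  ultimately show "UNIV \<inter> f -` U = {} \<or> finite (- (UNIV \<inter> f -` U))"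
    using assms by auto
qed simp

lemma finite_bc_C: "finite (bc_C n)"
proof -
  have "bc_C n = {..n} \<times> {..n}"
    by (auto simp: bc_C_def)
  then show ?thesis
    by simp
qed

lemma finite_subset_bc_C:
  assumes "finite F"
  obtains n where "F \<subseteq> bc_C n"
proof -
  have "finite (fst ` F \<union> snd ` F)"
    using assms by simp
  then obtain n where "\<forall>i\<in>fst ` F \<union> snd ` F. i \<le> n"
    using finite_nat_set_iff_bounded_le by blast
  then have "F \<subseteq> bc_C n"
    by (force simp: bc_C_def)
  then show thesis
    by (rule that)
qed

lemma finite_Compl_bc_W: "finite (- bc_W n x)"
proof -
  have "- bc_W n x \<subseteq> bc_C n"
    by (auto simp: bc_W_def)
  then show ?thesis
    using finite_bc_C finite_subset by blast
qed

lemma openin_tau_c_if_finite_Compl: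
  assumes "finite (- U)"
  shows "openin tau_c U"
proof -
  obtain n where "- U \<subseteq> bc_C n"
    using assms by (rule finite_subset_bc_C)
  then have U_eq: "U = (\<Union>x\<in>U. bc_W n x)"
    by (auto simp: bc_W_def)
  have "generate_topology_on {bc_W n x | n x. True} (\<Union>x\<in>U. bc_W n x)"
    by (rule generate_topology_on.UN) (auto intro: generate_topology_on.Basis)
  then show ?thesis
    unfolding tau_c_def using U_eq openin_topology_generated_by_iff by metis
qed

lemma tau_c_eq_cofinite_topology: "tau_c = cofinite_topology"
proof (rule topology_eq[THEN iffD2], intro allI iffI)
  fix U :: "bicyclic set"
  assume "openin tau_c U"
  then have "generate_topology_on {bc_W n x | n x. True} U"
    unfolding tau_c_def by (rule openin_topology_generated_by)
  then show "openin cofinite_topology U"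
  proof (induction rule: generate_topology_on.induct)
    case Empty
    show ?case
      by simp
  next
    case (Int a b)
    then show ?case
      by (blast intro: openin_Int)
  next
    case (UN \<K>)
    then show ?case
      by (blast intro: openin_Union)
  next
    case (Basis s)
    then show ?case
      using finite_Compl_bc_W by (auto simp: openin_cofinite_topology)
  qed
next
  fix U :: "bicyclic set"
  assume "openin cofinite_topology U"
  then show "openin tau_c U"
    using openin_tau_c_if_finite_Compl by (auto simp: openin_cofinite_topology)
qed

lemma finite_vimage_bc_mult_left: "finite ((\<lambda>x. bc_mult a x) -` {b})"
proof -
  obtain k l c d where "a = (k, l)" "b = (c, d)"
    by force
  then have "(\<lambda>x. bc_mult a x) -` {b} \<subseteq> {..c + l} \<times> {..d}"
    by (auto simp: bc_mult_def split: if_splits)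
  then show ?thesis
    using finite_subset by blast
qed

lemma finite_vimage_bc_mult_right: "finite ((\<lambda>x. bc_mult x a) -` {b})"
proof -
  obtain m n c d where "a = (m, n)" "b = (c, d)"
    by force
  then have "(\<lambda>x. bc_mult x a) -` {b} \<subseteq> {..c} \<times> {..d + m}"
    by (auto simp: bc_mult_def split: if_splits)
  then show ?thesis
    using finite_subset by blast
qed

lemma finite_vimage_bc_inv: "finite (bc_inv -` {b})"
proof -
  have "bc_inv -` {b} \<subseteq> {(snd b, fst b)}"
    by (auto simp: bc_inv_def)
  then show ?thesis
    using finite_subset by blast
qed

theorem proposition3:
  shows "topspace tau_c = UNIV
    \<and> compact_space tau_c
    \<and> t1_space tau_c
    \<and> (\<forall>a. continuous_map tau_c tau_c (\<lambda>x. bc_mult a x))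
    \<and> (\<forall>a. continuous_map tau_c tau_c (\<lambda>x. bc_mult x a))
    \<and> continuous_map tau_c tau_c bc_inv"
  unfolding tau_c_eq_cofinite_topology
  by (intro conjI allI topspace_cofinite_topology compact_space_cofinite_topology
      t1_space_cofinite_topology continuous_map_cofinite_topology
      finite_vimage_bc_mult_left finite_vimage_bc_mult_right finite_vimage_bc_inv)

end
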